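(* Let $I=[-1,1]$, $d\ge 2$, and let $p:I^d\to\mathbb{R}$ be a probability density function which is finite-rank in the following sense: for every $1\le k\le d-1$, the reshaped function $p(x_{1:k};x_{k+1:d})$, viewed as a Hilbert–Schmidt integral kernel from $L^2(I^{d-k})$ to $L^2(I^{k})$, has finite rank $r_k$. For $1\le k\le d-1$ let $\{\Phi_k(x_{1:k};\alpha_k)\}_{1\le\alpha_k\le r_k}$ be the first $r_k$ left singular vectors of $p(x_{1:k};x_{k+1:d})$. Then there exists a unique solution $G_1:I\times[r_1]\to\mathbb{R}$, $G_k:[r_{k-1}]\times I\times[r_k]\to\mathbb{R}$ for $2\le k\le d-1$, and $G_d:[r_{d-1}]\times I\to\mathbb{R}$ to the system of core determining equations $$G_1(x_1;\alpha_1)=\Phi_1(x_1;\alpha_1),$$ $$\sum_{\alpha_{k-1}=1}^{r_{k-1}}\Phi_{k-1}(x_{1:k-1};\alpha_{k-1})\,G_k(\alpha_{k-1};x_k,\alpha_k)=\Phi_k(x_{1:k-1};x_k,\alpha_k),\quad 2\le k\le d-1,$$ $$\sum_{\alpha_{d-1}=1}^{r_{d-1}}\Phi_{d-1}(x_{1:d-1};\alpha_{d-1})\,G_d(\alpha_{d-1};x_d)=p(x_{1:d-1};x_d),$$ and these cores give an exact tensor-train representation of $p$: $$p(x_1,\dots,x_d)=\sum_{\alpha_1=1}^{r_1}\cdots\sum_{\alpha_{d-1}=1}^{r_{d-1}}G_1(x_1,\alpha_1)G_2(\alpha_1,x_2,\alpha_2)\cdots G_d(\alpha_{d-1},x_d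).$$
   Context: Notation: $x_{m:n}$ denotes the variables $x_m,\dots,x_n$, and $[n]=\{1,\dots,n\}$. For $1\le k\le d-1$, $p(x_{1:k};x_{k+1:d})$ denotes $p$ regarded as a function of the two groups of variables $x_{1:k}\in I^k$ and $x_{k+1:d}\in I^{d-k}$, i.e. as the kernel of the integral operator $f\mapsto\int_{I^{d-k}}p(x_{1:k};x_{k+1:d})f(x_{k+1:d})\,dx_{k+1:d}$; it is assumed to be Hilbert–Schmidt so that it admits a singular value (Schmidt) decomposition, and "finite rank $r_k$" means the range (column space) of this operator has dimension $r_k$. The left singular vectors $\Phi_k(\cdot;\alpha_k)$, $1\le\alpha_k\le r_k$, are orthonormal functions in $L^2(I^k)$ spanning this range. In the $k$-th equation, $\Phi_k(x_{1:k-1};x_k,\alpha_k)$ is just $\Phi_k(x_{1:k};\alpha_k)$ with its arguments grouped differently. *)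

theory Defs
  imports "HOL-Analysis.Analysis"
begin

text \<open>Variables are indexed 1..d; a point of I^A (A a finite index set) is an
  extensional function nat => real, as in the product measure PiM.\<close>

definition Imeas :: "real measure" where
  "Imeas = restrict_space lborel {-1..1}"

definition cube :: "nat set \<Rightarrow> (nat \<Rightarrow> real) measure" where
  "cube A = PiM A (\<lambda>_. Imeas)"

definition probability_density :: "nat \<Rightarrow> ((nat \<Rightarrow> real) \<Rightarrow> real) \<Rightarrow> bool" where
  "probability_density d p \<longleftrightarrow>
     p \<in> borel_measurable (cube {1..d}) \<and>
     (\<forall>x\<in>space (cube {1..d}). 0 \<le> p x) \<and>
     integrable (cube {1..d}) p \<and> (\<integral>x. p x \<partial>cube {1..d}) = 1"

definition orthonormal_L2 ::
  "(nat \<Rightarrow> real) measure \<Rightarrow> nat \<Rightarrow> ((nat \<Rightarrow> real) \<Rightarrow> nat \<Rightarrow> real) \<Rightarrow> bool" where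
  "orthonormal_L2 M r f \<longleftrightarrow>
     (\<forall>a\<in>{1..r}. (\<lambda>x. f x a) \<in> borel_measurable M \<and> integrable M (\<lambda>x. (f x a)^2)) \<and>
     (\<forall>a\<in>{1..r}. \<forall>b\<in>{1..r}. (\<integral>x. f x a * f x b \<partial>M) = (if a = b then 1 else 0))"

text \<open>Schmidt (singular value) decomposition of the reshaped kernel
  p(x_{1:k}; x_{k+1:d}) with exactly r terms (i.e. the kernel has rank r), with
  singular values ordered decreasingly; Phi(.;1..r) are then its (first) r left
  singular vectors.\<close>
definition left_singular_vectors ::
  "nat \<Rightarrow> ((nat \<Rightarrow> real) \<Rightarrow> real) \<Rightarrow> nat \<Rightarrow> nat \<Rightarrow> ((nat \<Rightarrow> real) \<Rightarrow> nat \<Rightarrow> real) \<Rightarrow> bool" where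
  "left_singular_vectors d p k r \<Phi> \<longleftrightarrow>
     (\<exists>(\<sigma>::nat \<Rightarrow> real) \<Psi>.
        (\<forall>a\<in>{1..r}. 0 < \<sigma> a) \<and> (\<forall>a\<in>{1..<r}. \<sigma> (Suc a) \<le> \<sigma> a) \<and>
        orthonormal_L2 (cube {1..k}) r \<Phi> \<and>
        orthonormal_L2 (cube {Suc k..d}) r \<Psi> \<and>
        (AE x in cube {1..d}. p x =
            (\<Sum>a\<in>{1..r}. \<sigma> a * \<Phi> (restrict x {1..k}) a * \<Psi> (restrict x {Suc k..d}) a)))"

text \<open>Core determining equations (holding almost everywhere). G1 t a = G_1(t;a),
  Gm k a t b = G_k(a;t,b) for 2 <= k <= d-1, Gd a t = G_d(a;t).\<close>
definition core_eqs ::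
  "nat \<Rightarrow> (nat \<Rightarrow> nat) \<Rightarrow> (nat \<Rightarrow> (nat \<Rightarrow> real) \<Rightarrow> nat \<Rightarrow> real) \<Rightarrow> ((nat \<Rightarrow> real) \<Rightarrow> real) \<Rightarrow>
   (real \<Rightarrow> nat \<Rightarrow> real) \<Rightarrow> (nat \<Rightarrow> nat \<Rightarrow> real \<Rightarrow> nat \<Rightarrow> real) \<Rightarrow> (nat \<Rightarrow> real \<Rightarrow> real) \<Rightarrow> bool" where
  "core_eqs d r \<Phi> p G1 Gm Gd \<longleftrightarrow>
     (\<forall>a\<in>{1..r 1}. AE x in cube {1..1}. G1 (x 1) a = \<Phi> 1 x a) \<and>
     (\<forall>k\<in>{2..d-1}. \<forall>b\<in>{1..r k}. AE x in cube {1..k}.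
        (\<Sum>a\<in>{1..r (k-1)}. \<Phi> (k-1) (restrict x {1..k-1}) a * Gm k a (x k) b) = \<Phi> k x b) \<and>
     (AE x in cube {1..d}.
        (\<Sum>a\<in>{1..r (d-1)}. \<Phi> (d-1) (restrict x {1..d-1}) a * Gd a (x d)) = p x)"

definition cores_agree ::
  "nat \<Rightarrow> (nat \<Rightarrow> nat) \<Rightarrow>
   (real \<Rightarrow> nat \<Rightarrow> real) \<Rightarrow> (nat \<Rightarrow> nat \<Rightarrow> real \<Rightarrow> nat \<Rightarrow> real) \<Rightarrow> (nat \<Rightarrow> real \<Rightarrow> real) \<Rightarrow>
   (real \<Rightarrow> nat \<Rightarrow> real) \<Rightarrow> (nat \<Rightarrow> nat \<Rightarrow> real \<Rightarrow> nat \<Rightarrow> real) \<Rightarrow> (nat \<Rightarrow> real \<Rightarrow> real) \<Rightarrow> bool" where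
  "cores_agree d r G1 Gm Gd G1' Gm' Gd' \<longleftrightarrow>
     (\<forall>a\<in>{1..r 1}. AE t in Imeas. G1' t a = G1 t a) \<and>
     (\<forall>k\<in>{2..d-1}. \<forall>a\<in>{1..r (k-1)}. \<forall>b\<in>{1..r k}. AE t in Imeas. Gm' k a t b = Gm k a t b) \<and>
     (\<forall>a\<in>{1..r (d-1)}. AE t in Imeas. Gd' a t = Gd a t)"

definition tt_eval ::
  "nat \<Rightarrow> (nat \<Rightarrow> nat) \<Rightarrow>
   (real \<Rightarrow> nat \<Rightarrow> real) \<Rightarrow> (nat \<Rightarrow> nat \<Rightarrow> real \<Rightarrow> nat \<Rightarrow> real) \<Rightarrow> (nat \<Rightarrow> real \<Rightarrow> real) \<Rightarrow>
   (nat \<Rightarrow> real) \<Rightarrow> real" where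
  "tt_eval d r G1 Gm Gd x =
     (\<Sum>\<alpha>\<in>PiE {1..d-1} (\<lambda>k. {1..r k}).
        G1 (x 1) (\<alpha> 1) * (\<Prod>k\<in>{2..d-1}. Gm k (\<alpha> (k-1)) (x k) (\<alpha> k)) * Gd (\<alpha> (d-1)) (x d))"

end

theory Submission
  imports Defs
begin

(* Write the Schmidt decompositions p = sum_a sigma_k(a) Phi_k(x_{1:k}; a) Psi_k(x_{k+1:d}; a).
   Fixing x_{1:k}, the decompositions for k - 1 and k are two expansions of p(x_{1:k}, .) in
   L^2 of the remaining variables; pairing both with Psi_k(.; b) and using orthonormality gives
     Phi_k(x_{1:k}; b) = sum_a Phi_{k-1}(x_{1:k-1}; a) G_k(a; x_k, b),
     G_k(a; t, b) = sigma_{k-1}(a) / sigma_k(b) * <Psi_{k-1}(t, .; a), Psi_k(.; b)>,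
   while G_1 = Phi_1 and the decomposition for k = d - 1 gives G_d(a; t) = sigma_{d-1}(a) Psi_{d-1}(t; a).
   The cores are unique because coefficients of an expansion in the orthonormal functions
   Phi_{k-1}(.; a) are determined almost everywhere, and substituting the core equations into one
   another telescopes p into the tensor train. *)

lemma finite_measure_Imeas: "finite_measure Imeas"
  unfolding Imeas_def by (intro finite_measureI) (auto simp: emeasure_restrict_space)

lemma product_sigma_finite_Imeas: "product_sigma_finite (\<lambda>_::nat. Imeas)"
  unfolding product_sigma_finite_def
  using finite_measure_Imeas by (simp add: finite_measure_def)

lemma sigma_finite_cube: "finite I \<Longrightarrow> sigma_finite_measure (cube I)"
  unfolding cube_def by (rule product_sigma_finite.sigma_finite[OF product_sigma_finite_Imeas])

lemma pair_sigma_finite_cube: "finite I \<Longrightarrow> finite J \<Longrightarrow> pair_sigma_finite (cube I) (cube J)"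
  by (simp add: pair_sigma_finite_def sigma_finite_cube)

lemma space_cube: "space (cube I) = PiE I (\<lambda>_. {-1..1})"
  unfolding cube_def Imeas_def by (simp add: space_PiM)

lemma distr_merge_cube:
  "I \<inter> J = {} \<Longrightarrow> finite I \<Longrightarrow> finite J \<Longrightarrow>
    distr (cube I \<Otimes>\<^sub>M cube J) (cube (I \<union> J)) (merge I J) = cube (I \<union> J)"
  unfolding cube_def using product_sigma_finite.distr_merge[OF product_sigma_finite_Imeas] by blast

lemma measurable_merge_cube: "merge I J \<in> measurable (cube I \<Otimes>\<^sub>M cube J) (cube (I \<union> J))"
  unfolding cube_def by (rule measurable_merge)

lemma measurable_restrict_cube: "J \<subseteq> K \<Longrightarrow> (\<lambda>x. restrict x J) \<in> measurable (cube K) (cube J)"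
  unfolding cube_def by (rule measurable_restrict_subset)

lemma AE_cube_merge:
  assumes "I \<inter> J = {}" "finite I" "finite J" and "AE x in cube (I \<union> J). P x"
  shows "AE y in cube I. AE z in cube J. P (merge I J (y, z))"
proof -
  interpret pair_sigma_finite "cube I" "cube J"
    using assms by (simp add: pair_sigma_finite_cube)
  have "AE x in distr (cube I \<Otimes>\<^sub>M cube J) (cube (I \<union> J)) (merge I J). P x"
    using assms by (subst distr_merge_cube) auto
  then show ?thesis
    by (intro AE_pair AE_distrD[OF measurable_merge_cube])
qed

lemma AE_comp_of_null_vimage:
  assumes "\<And>N. N \<in> null_sets M \<Longrightarrow> h -` N \<inter> space M' \<in> null_sets M'"
    and "h \<in> space M' \<rightarrow> space M" and "AE y in M. P y"
  shows "AE x in M'. P (h x)"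
proof -
  obtain N where "N \<in> null_sets M" and "{y \<in> space M. \<not> P y} \<subseteq> N"
    using assms(3) by (auto simp: eventually_ae_filter)
  then show ?thesis
    using assms(1,2) by (intro AE_I'[of "h -` N \<inter> space M'"]) auto
qed

lemma null_vimage_restrict_cube:
  assumes "finite K" "J \<subseteq> K" and N: "N \<in> null_sets (cube J)"
  shows "(\<lambda>x. restrict x J) -` N \<inter> space (cube K) \<in> null_sets (cube K)"
proof -
  define L where "L = K - J"
  have JL: "J \<inter> L = {}" "J \<union> L = K" "finite J" "finite L"
    using assms finite_subset by (auto simp: L_def)
  interpret L: sigma_finite_measure "cube L"
    using JL by (simp add: sigma_finite_cube)
  define S where "S = (\<lambda>x. restrict x J) -` N \<inter> space (cube K)"
  have S: "S \<in> sets (cube K)"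
    unfolding S_def using measurable_restrict_cube[OF assms(2)] null_setsD2[OF N] by measurable
  have "(y, z) \<in> merge J L -` S \<longleftrightarrow> y \<in> N" if "(y, z) \<in> space (cube J \<Otimes>\<^sub>M cube L)" for y z
  proof -
    have "y \<in> space (cube J)" "merge J L (y, z) \<in> space (cube K)"
      using that measurable_space[OF measurable_merge_cube, of "(y, z)" J L] JL(2)
      by (auto simp: space_pair_measure)
    moreover have "restrict (merge J L (y, z)) J = y"
      using \<open>y \<in> space (cube J)\<close> JL(1) by (simp add: space_cube PiE_iff extensional_restrict)
    ultimately show ?thesis
      by (simp add: S_def)
  qed
  then have "merge J L -` S \<inter> space (cube J \<Otimes>\<^sub>M cube L) = N \<times> space (cube L)"
    using null_setsD2[OF N, THEN sets.sets_into_space] by (auto simp: space_pair_measure)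
  then have "emeasure (cube K) S = emeasure (cube J \<Otimes>\<^sub>M cube L) (N \<times> space (cube L))"
    using emeasure_distr[OF measurable_merge_cube S[folded JL(2)]] distr_merge_cube[OF JL(1,3,4)]
    unfolding JL(2) by simp
  also have "\<dots> = 0"
    using L.times_in_null_sets1[OF N] by (simp add: null_sets_def)
  finally show ?thesis
    using S by (simp add: S_def null_sets_def)
qed

lemma AE_cube_restrict:
  assumes "finite K" "J \<subseteq> K" and "AE y in cube J. P y"
  shows "AE x in cube K. P (restrict x J)"
proof (rule AE_comp_of_null_vimage[OF _ _ assms(3)])
  show "N \<in> null_sets (cube J) \<Longrightarrow> (\<lambda>x. restrict x J) -` N \<inter> space (cube K) \<in> null_sets (cube K)"
    for N using assms(1,2) by (rule null_vimage_restrict_cube)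
  show "(\<lambda>x. restrict x J) \<in> space (cube K) \<rightarrow> space (cube J)"
    using measurable_space[OF measurable_restrict_cube[OF assms(2)]] by blast
qed

lemma measurable_cube_singleton_embedding:
  "(\<lambda>t. (\<lambda>_. undefined)(k := t)) \<in> measurable Imeas (cube {k})"
  unfolding cube_def
  using measurable_component_update[of "\<lambda>_. undefined" "{}" "\<lambda>_. Imeas" k]
  by (simp add: space_PiM)

lemma distr_cube_singleton_embedding:
  "distr Imeas (cube {k}) (\<lambda>t. (\<lambda>_. undefined)(k := t)) = cube {k}"
proof -
  have proj: "(\<lambda>x. x k) \<in> measurable (cube {k}) Imeas"
    unfolding cube_def by (rule measurable_component_singleton) simp
  have "distr Imeas (cube {k}) (\<lambda>t. (\<lambda>_. undefined)(k := t))
      = distr (distr (cube {k}) Imeas (\<lambda>x. x k)) (cube {k}) (\<lambda>t. (\<lambda>_. undefined)(k := t))"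
    unfolding cube_def by (simp add: product_sigma_finite.distr_singleton[OF product_sigma_finite_Imeas])
  also have "\<dots> = distr (cube {k}) (cube {k}) (\<lambda>x. x)"
    by (subst distr_distr[OF measurable_cube_singleton_embedding proj], rule distr_cong)
       (auto simp: space_cube PiE_iff extensional_def fun_eq_iff)
  finally show ?thesis by simp
qed

lemma AE_Imeas_of_AE_cube_singleton:
  assumes "AE x in cube {k}. P (x k)"
  shows "AE t in Imeas. P t"
proof -
  have "AE x in distr Imeas (cube {k}) (\<lambda>t. (\<lambda>_. undefined)(k := t)). P (x k)"
    unfolding distr_cube_singleton_embedding by (rule assms)
  from AE_distrD[OF measurable_cube_singleton_embedding this] show ?thesis
    by simp
qed

lemma AE_integrable_cube_section:
  fixes f :: "(nat \<Rightarrow> real) \<Rightarrow> real"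
  assumes "I \<inter> J = {}" "finite I" "finite J" and "integrable (cube (I \<union> J)) f"
  shows "AE y in cube I. integrable (cube J) (\<lambda>z. f (merge I J (y, z)))"
proof -
  interpret pair_sigma_finite "cube I" "cube J"
    using assms by (simp add: pair_sigma_finite_cube)
  have "integrable (distr (cube I \<Otimes>\<^sub>M cube J) (cube (I \<union> J)) (merge I J)) f"
    using assms by (subst distr_merge_cube) auto
  then have "integrable (cube I \<Otimes>\<^sub>M cube J) (\<lambda>x. f (merge I J x))"
    using integrable_distr_eq[OF measurable_merge_cube borel_measurable_integrable[OF assms(4)]]
    by simp
  then show ?thesis
    by (rule AE_integrable_fst')
qed

lemma AE_integrable_cube_fun_upd_section:
  fixes f :: "(nat \<Rightarrow> real) \<Rightarrow> real"
  assumes "finite A" "k \<in> A" "finite B" "k \<notin> B" and "integrable (cube (insert k B)) f"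
  shows "AE y in cube A. integrable (cube B) (\<lambda>z. f (z(k := y k)))"
proof -
  have "AE w in cube {k}. integrable (cube B) (\<lambda>z. f (merge {k} B (w, z)))"
    using assms by (intro AE_integrable_cube_section) auto
  then have "AE w in cube {k}. integrable (cube B) (\<lambda>z. f (z(k := w k)))"
  proof (rule eventually_mono)
    fix w
    have "merge {k} B (w, z) = z(k := w k)" if "z \<in> space (cube B)" for z
      using that \<open>k \<notin> B\<close> by (auto simp: space_cube PiE_iff extensional_def merge_def)
    then show "integrable (cube B) (\<lambda>z. f (merge {k} B (w, z))) \<Longrightarrow> integrable (cube B) (\<lambda>z. f (z(k := w k)))"
      using Bochner_Integration.integrable_cong[where M="cube B" and N="cube B" and f="\<lambda>z. f (merge {k} B (w, z))"
          and g="\<lambda>z. f (z(k := w k))"] by simp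
  qed
  from AE_cube_restrict[OF assms(1) _ this] show ?thesis
    using assms(2) by simp
qed

lemma measurable_fun_upd_cube:
  assumes "t \<in> {-1..1}" "k \<notin> B"
  shows "(\<lambda>z. z(k := t)) \<in> measurable (cube B) (cube (insert k B))"
  unfolding cube_def using assms
  by (intro measurable_fun_upd[where J=B]) (auto simp: Imeas_def intro: measurable_ident_sets)

lemma integrable_mult_of_square_integrable:
  fixes f g :: "'a \<Rightarrow> real"
  assumes "f \<in> borel_measurable M" "g \<in> borel_measurable M"
    and "integrable M (\<lambda>x. (f x)^2)" "integrable M (\<lambda>x. (g x)^2)"
  shows "integrable M (\<lambda>x. f x * g x)"
proof (rule Bochner_Integration.integrable_bound)
  show "integrable M (\<lambda>x. (f x)^2 + (g x)^2)"
    using assms by simp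
  show "(\<lambda>x. f x * g x) \<in> borel_measurable M"
    using assms by simp
  have "\<bar>f x * g x\<bar> \<le> (f x)^2 + (g x)^2" for x
    using sum_squares_bound[of "f x" "g x"] sum_squares_bound[of "- f x" "g x"]
    by (simp add: abs_le_iff power2_eq_square)
  then show "AE x in M. norm (f x * g x) \<le> norm ((f x)^2 + (g x)^2)"
    by simp
qed

lemma orthonormal_L2_project:
  fixes f :: "nat \<Rightarrow> (nat \<Rightarrow> real) \<Rightarrow> real"
  assumes on: "orthonormal_L2 M r \<Psi>" and b: "b \<in> {1..r}" and "finite A"
    and f_meas: "\<And>a. a \<in> A \<Longrightarrow> f a \<in> borel_measurable M"
    and f_sq: "\<And>a. a \<in> A \<Longrightarrow> integrable M (\<lambda>z. (f a z)^2)"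
    and eq: "AE z in M. (\<Sum>a\<in>A. c a * f a z) = (\<Sum>a\<in>{1..r}. e a * \<Psi> z a)"
  shows "(\<Sum>a\<in>A. c a * (\<integral>z. f a z * \<Psi> z b \<partial>M)) = e b"
proof -
  have \<Psi>_meas: "a \<in> {1..r} \<Longrightarrow> (\<lambda>z. \<Psi> z a) \<in> borel_measurable M" for a
    using on by (simp add: orthonormal_L2_def)
  have \<Psi>_sq: "a \<in> {1..r} \<Longrightarrow> integrable M (\<lambda>z. (\<Psi> z a)^2)" for a
    using on by (simp add: orthonormal_L2_def)
  have "(\<Sum>a\<in>A. c a * (\<integral>z. f a z * \<Psi> z b \<partial>M)) = (\<integral>z. (\<Sum>a\<in>A. c a * f a z) * \<Psi> z b \<partial>M)"
    using f_meas f_sq \<Psi>_meas[OF b] \<Psi>_sq[OF b]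
    by (simp add: sum_distrib_right mult.assoc integrable_mult_of_square_integrable)
  also have "\<dots> = (\<integral>z. (\<Sum>a\<in>{1..r}. e a * \<Psi> z a) * \<Psi> z b \<partial>M)"
  proof (rule integral_cong_AE)
    show "(\<lambda>z. (\<Sum>a\<in>A. c a * f a z) * \<Psi> z b) \<in> borel_measurable M"
      using f_meas \<Psi>_meas[OF b] by simp
    show "(\<lambda>z. (\<Sum>a\<in>{1..r}. e a * \<Psi> z a) * \<Psi> z b) \<in> borel_measurable M"
      using \<Psi>_meas b by (auto intro!: borel_measurable_times borel_measurable_sum)
    show "AE z in M. (\<Sum>a\<in>A. c a * f a z) * \<Psi> z b = (\<Sum>a\<in>{1..r}. e a * \<Psi> z a) * \<Psi> z b"
      using eq by eventually_elim simp
  qed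
  also have "\<dots> = (\<Sum>a\<in>{1..r}. e a * (\<integral>z. \<Psi> z a * \<Psi> z b \<partial>M))"
    using \<Psi>_meas \<Psi>_sq b
    by (simp add: sum_distrib_right mult.assoc integrable_mult_of_square_integrable)
  also have "\<dots> = (\<Sum>a\<in>{1..r}. if a = b then e a else 0)"
    using on b by (intro sum.cong) (auto simp: orthonormal_L2_def)
  also have "\<dots> = e b"
    using b by simp
  finally show ?thesis .
qed

lemma orthonormal_L2_coeff_eq_zero:
  assumes "orthonormal_L2 M r \<Psi>" "b \<in> {1..r}"
    and "AE z in M. (\<Sum>a\<in>{1..r}. c a * \<Psi> z a) = 0"
  shows "c b = 0"
proof -
  have "AE z in M. (\<Sum>a\<in>{}. c a * \<Psi> z a) = (\<Sum>a\<in>{1..r}. c a * \<Psi> z a)"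
    using assms(3) by simp
  from orthonormal_L2_project[OF assms(1,2) finite.emptyI _ _ this] show ?thesis
    by simp
qed

lemma orthonormal_L2_cube_expansion_unique:
  assumes "finite J" "k \<notin> J" and on: "orthonormal_L2 (cube J) r \<Phi>"
    and F: "AE x in cube (insert k J). (\<Sum>a\<in>{1..r}. \<Phi> (restrict x J) a * F a (x k)) = g x"
    and F': "AE x in cube (insert k J). (\<Sum>a\<in>{1..r}. \<Phi> (restrict x J) a * F' a (x k)) = g x"
    and a: "a \<in> {1..r}"
  shows "AE t in Imeas. F a t = F' a t"
proof -
  have "AE x in cube ({k} \<union> J).
      (\<Sum>a\<in>{1..r}. \<Phi> (restrict x J) a * (F a (x k) - F' a (x k))) = 0"
    using F F' unfolding insert_is_Un[of k J, symmetric]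
    by eventually_elim (simp add: right_diff_distrib sum_subtractf)
  from AE_cube_merge[OF _ _ assms(1) this]
  have "AE w in cube {k}. AE y in cube J.
      (\<Sum>a\<in>{1..r}. \<Phi> (restrict (merge {k} J (w, y)) J) a *
        (F a (merge {k} J (w, y) k) - F' a (merge {k} J (w, y) k))) = 0"
    using assms(2) by simp
  then have "AE w in cube {k}. F a (w k) - F' a (w k) = 0"
  proof (rule eventually_mono)
    fix w
    assume "AE y in cube J. (\<Sum>a\<in>{1..r}. \<Phi> (restrict (merge {k} J (w, y)) J) a *
        (F a (merge {k} J (w, y) k) - F' a (merge {k} J (w, y) k))) = 0"
    then have "AE y in cube J. (\<Sum>a\<in>{1..r}. (F a (w k) - F' a (w k)) * \<Phi> y a) = 0"
      using AE_space
    proof eventually_elim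
      case (elim y)
      then show ?case
        using \<open>k \<notin> J\<close> by (simp add: space_cube PiE_iff extensional_restrict mult.commute)
    qed
    from orthonormal_L2_coeff_eq_zero[OF on a this] show "F a (w k) - F' a (w k) = 0" .
  qed
  then show ?thesis
    by (auto dest: AE_Imeas_of_AE_cube_singleton)
qed

lemma AE_cube_split_fun_upd:
  assumes "finite J" "finite B" "k \<notin> J" "k \<notin> B" "J \<inter> B = {}"
    and "AE x in cube (insert k J \<union> B).
      P (restrict x J) (restrict x (insert k B)) (restrict x (insert k J)) (restrict x B)"
  shows "AE y in cube (insert k J). AE z in cube B. P (restrict y J) (z(k := y k)) y z"
proof -
  define A where "A = insert k J"
  have A: "finite A" "A \<inter> B = {}"
    using assms(1-5) by (auto simp: A_def)
  from AE_cube_merge[OF A(2,1) \<open>finite B\<close> assms(6)[folded A_def]]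
  show ?thesis
    unfolding A_def[symmetric] using AE_space
  proof eventually_elim
    case (elim y)
    show ?case
      using elim(1) AE_space
    proof eventually_elim
      case (elim z)
      have "y \<in> extensional A" "z \<in> extensional B"
        using \<open>y \<in> space (cube A)\<close> \<open>z \<in> space (cube B)\<close> by (simp_all add: space_cube PiE_iff)
      then have "restrict (merge A B (y, z)) J = restrict y J"
        "restrict (merge A B (y, z)) (insert k B) = z(k := y k)"
        "restrict (merge A B (y, z)) A = y" "restrict (merge A B (y, z)) B = z"
        using A \<open>J \<inter> B = {}\<close> \<open>k \<notin> B\<close>
        by (auto simp: A_def restrict_def merge_def extensional_def fun_eq_iff)
      then show ?case
        using elim(1) by simp
    qed
  qed
qed

lemma schmidt_decompositions_core_eq:
  fixes \<Phi>1 \<Phi>2 \<Psi>1 \<Psi>2 :: "(nat \<Rightarrow> real) \<Rightarrow> nat \<Rightarrow> real"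
  assumes "finite J" "finite B" "k \<notin> J" "k \<notin> B" "J \<inter> B = {}"
    and on1: "orthonormal_L2 (cube (insert k B)) r1 \<Psi>1"
    and dec1: "AE x in cube (insert k J \<union> B).
      p x = (\<Sum>a\<in>{1..r1}. \<sigma>1 a * \<Phi>1 (restrict x J) a * \<Psi>1 (restrict x (insert k B)) a)"
    and on2: "orthonormal_L2 (cube B) r2 \<Psi>2"
    and dec2: "AE x in cube (insert k J \<union> B).
      p x = (\<Sum>a\<in>{1..r2}. \<sigma>2 a * \<Phi>2 (restrict x (insert k J)) a * \<Psi>2 (restrict x B) a)"
    and b: "b \<in> {1..r2}" "\<sigma>2 b \<noteq> 0"
  shows "AE y in cube (insert k J). (\<Sum>a\<in>{1..r1}. \<Phi>1 (restrict y J) a *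
      (\<sigma>1 a / \<sigma>2 b * (\<integral>z. \<Psi>1 (z(k := y k)) a * \<Psi>2 z b \<partial>cube B))) = \<Phi>2 y b"
proof -
  have "AE y in cube (insert k J). AE z in cube B.
      (\<Sum>a\<in>{1..r1}. (\<sigma>1 a * \<Phi>1 (restrict y J) a) * \<Psi>1 (z(k := y k)) a)
    = (\<Sum>a\<in>{1..r2}. (\<sigma>2 a * \<Phi>2 y a) * \<Psi>2 z a)"
    using dec1 dec2 assms(1-5)
    by (intro AE_cube_split_fun_upd[where P="\<lambda>u v w z. (\<Sum>a\<in>{1..r1}. (\<sigma>1 a * \<Phi>1 u a) * \<Psi>1 v a)
      = (\<Sum>a\<in>{1..r2}. (\<sigma>2 a * \<Phi>2 w a) * \<Psi>2 z a)"]) (auto elim: AE_mp)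
  moreover have "AE y in cube (insert k J). \<forall>a\<in>{1..r1}. integrable (cube B) (\<lambda>z. (\<Psi>1 (z(k := y k)) a)^2)"
    using on1 assms(1-4)
    by (intro AE_finite_allI AE_integrable_cube_fun_upd_section) (auto simp: orthonormal_L2_def)
  ultimately show ?thesis
    using AE_space
  proof eventually_elim
    case (elim y)
    then have "y k \<in> {-1..1}"
      by (auto simp: space_cube)
    have meas: "(\<lambda>z. \<Psi>1 (z(k := y k)) a) \<in> borel_measurable (cube B)" if "a \<in> {1..r1}" for a
    proof -
      have "(\<lambda>x. \<Psi>1 x a) \<in> borel_measurable (cube (insert k B))"
        using on1 that by (simp add: orthonormal_L2_def)
      from measurable_compose[OF measurable_fun_upd_cube[OF \<open>y k \<in> {-1..1}\<close> \<open>k \<notin> B\<close>] this]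
      show ?thesis .
    qed
    from orthonormal_L2_project[OF on2 b(1) finite_atLeastAtMost meas _ elim(1)] elim(2)
    have "(\<Sum>a\<in>{1..r1}. \<sigma>1 a * \<Phi>1 (restrict y J) a * (\<integral>z. \<Psi>1 (z(k := y k)) a * \<Psi>2 z b \<partial>cube B))
        = \<sigma>2 b * \<Phi>2 y b"
      by simp
    then show ?case
      using b(2) by (simp add: sum_divide_distrib[symmetric] field_simps)
  qed
qed

lemma sum_PiE_insert:
  assumes "m \<notin> S"
  shows "(\<Sum>\<alpha>\<in>PiE (insert m S) R. f \<alpha>) = (\<Sum>a\<in>R m. \<Sum>\<beta>\<in>PiE S R. f (\<beta>(m := a)))"
proof -
  have "(\<Sum>\<alpha>\<in>PiE (insert m S) R. f \<alpha>) = (\<Sum>(a, \<beta>)\<in>R m \<times> PiE S R. f (\<beta>(m := a)))"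
    unfolding PiE_insert_eq using inj_combinator[OF assms]
    by (subst sum.reindex) (auto simp: case_prod_unfold)
  also have "\<dots> = (\<Sum>a\<in>R m. \<Sum>\<beta>\<in>PiE S R. f (\<beta>(m := a)))"
    by (rule sum.cartesian_product[symmetric])
  finally show ?thesis .
qed

definition tt_prod ::
  "(real \<Rightarrow> nat \<Rightarrow> real) \<Rightarrow> (nat \<Rightarrow> nat \<Rightarrow> real \<Rightarrow> nat \<Rightarrow> real) \<Rightarrow> (nat \<Rightarrow> real) \<Rightarrow> nat \<Rightarrow>
   (nat \<Rightarrow> nat) \<Rightarrow> real" where
  "tt_prod G1 Gm x n \<alpha> = G1 (x 1) (\<alpha> 1) * (\<Prod>k\<in>{2..n}. Gm k (\<alpha> (k - 1)) (x k) (\<alpha> k))"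

definition tt_partial ::
  "(real \<Rightarrow> nat \<Rightarrow> real) \<Rightarrow> (nat \<Rightarrow> nat \<Rightarrow> real \<Rightarrow> nat \<Rightarrow> real) \<Rightarrow> (nat \<Rightarrow> nat) \<Rightarrow>
   (nat \<Rightarrow> real) \<Rightarrow> nat \<Rightarrow> nat \<Rightarrow> real" where
  "tt_partial G1 Gm r x n b = (\<Sum>\<alpha>\<in>PiE {1..n - 1} (\<lambda>k. {1..r k}). tt_prod G1 Gm x n (\<alpha>(n := b)))"

lemma tt_prod_fun_upd_Suc:
  assumes "1 \<le> n"
  shows "tt_prod G1 Gm x (Suc n) (\<alpha>(Suc n := b)) = tt_prod G1 Gm x n \<alpha> * Gm (Suc n) (\<alpha> n) (x (Suc n)) b"
proof -
  have "(\<Prod>k\<in>{2..Suc n}. Gm k ((\<alpha>(Suc n := b)) (k - 1)) (x k) ((\<alpha>(Suc n := b)) k))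
      = (\<Prod>k\<in>{2..n}. Gm k ((\<alpha>(Suc n := b)) (k - 1)) (x k) ((\<alpha>(Suc n := b)) k)) * Gm (Suc n) (\<alpha> n) (x (Suc n)) b"
    using assms by (simp add: prod.nat_ivl_Suc')
  also have "(\<Prod>k\<in>{2..n}. Gm k ((\<alpha>(Suc n := b)) (k - 1)) (x k) ((\<alpha>(Suc n := b)) k))
      = (\<Prod>k\<in>{2..n}. Gm k (\<alpha> (k - 1)) (x k) (\<alpha> k))"
    by (intro prod.cong) auto
  finally show ?thesis
    using assms by (simp add: tt_prod_def mult.assoc)
qed

lemma sum_PiE_tt_prod:
  assumes "1 \<le> n"
  shows "(\<Sum>\<alpha>\<in>PiE {1..n} (\<lambda>k. {1..r k}). tt_prod G1 Gm x n \<alpha> * g (\<alpha> n))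
    = (\<Sum>a\<in>{1..r n}. tt_partial G1 Gm r x n a * g a)"
proof -
  have "{1..n} = insert n {1..n - 1}"
    using assms by auto
  then have "(\<Sum>\<alpha>\<in>PiE {1..n} (\<lambda>k. {1..r k}). tt_prod G1 Gm x n \<alpha> * g (\<alpha> n))
      = (\<Sum>a\<in>{1..r n}. \<Sum>\<beta>\<in>PiE {1..n - 1} (\<lambda>k. {1..r k}). tt_prod G1 Gm x n (\<beta>(n := a)) * g a)"
    using assms by (simp add: sum_PiE_insert)
  then show ?thesis
    by (simp add: tt_partial_def sum_distrib_right)
qed

lemma tt_partial_Suc:
  assumes "1 \<le> n"
  shows "tt_partial G1 Gm r x (Suc n) b = (\<Sum>a\<in>{1..r n}. tt_partial G1 Gm r x n a * Gm (Suc n) a (x (Suc n)) b)"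
  using assms sum_PiE_tt_prod[OF assms, where g="\<lambda>a. Gm (Suc n) a (x (Suc n)) b"]
  by (simp add: tt_partial_def[of _ _ _ _ "Suc n"] tt_prod_fun_upd_Suc)

lemma tt_eval_eq_sum_tt_partial:
  assumes "2 \<le> d"
  shows "tt_eval d r G1 Gm Gd x = (\<Sum>a\<in>{1..r (d - 1)}. tt_partial G1 Gm r x (d - 1) a * Gd a (x d))"
  using assms sum_PiE_tt_prod[where n="d - 1" and g="\<lambda>a. Gd a (x d)"]
  by (simp add: tt_eval_def tt_prod_def)

lemma core_eqsD:
  assumes "core_eqs d r \<Phi> p G1 Gm Gd"
  shows "a \<in> {1..r 1} \<Longrightarrow> AE x in cube {1..1}. G1 (x 1) a = \<Phi> 1 x a"
    and "k \<in> {2..d - 1} \<Longrightarrow> b \<in> {1..r k} \<Longrightarrow> AE x in cube {1..k}.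
      (\<Sum>a\<in>{1..r (k - 1)}. \<Phi> (k - 1) (restrict x {1..k - 1}) a * Gm k a (x k) b) = \<Phi> k x b"
    and "AE x in cube {1..d}.
      (\<Sum>a\<in>{1..r (d - 1)}. \<Phi> (d - 1) (restrict x {1..d - 1}) a * Gd a (x d)) = p x"
  using assms unfolding core_eqs_def by blast+

lemma core_eqs_partial_contraction:
  assumes eqs: "core_eqs d r \<Phi> p G1 Gm Gd" and "1 \<le> n" "n \<le> d - 1"
  shows "AE x in cube {1..d}. \<forall>b\<in>{1..r n}. \<Phi> n (restrict x {1..n}) b = tt_partial G1 Gm r x n b"
  using assms(2,3)
proof (induction n rule: nat_induct_at_least)
  case base
  show ?case
  proof (rule AE_finite_allI)
    fix b assume "b \<in> {1..r 1}"
    from AE_cube_restrict[OF _ _ core_eqsD(1)[OF eqs this], of "{1..d}"]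
    have "AE x in cube {1..d}. G1 (restrict x {1..1} 1) b = \<Phi> 1 (restrict x {1..1}) b"
      using base.prems by simp
    then show "AE x in cube {1..d}. \<Phi> 1 (restrict x {1..1}) b = tt_partial G1 Gm r x 1 b"
      by eventually_elim (simp add: tt_partial_def tt_prod_def)
  qed simp
next
  case (Suc n)
  have "Suc n \<in> {2..d - 1}"
    using Suc by auto
  show ?case
  proof (rule AE_finite_allI)
    fix b assume "b \<in> {1..r (Suc n)}"
    from AE_cube_restrict[OF _ _ core_eqsD(2)[OF eqs \<open>Suc n \<in> {2..d - 1}\<close> this], of "{1..d}"]
    have "AE x in cube {1..d}.
        (\<Sum>a\<in>{1..r n}. \<Phi> n (restrict x {1..n}) a * Gm (Suc n) a (x (Suc n)) b)
          = \<Phi> (Suc n) (restrict x {1..Suc n}) b"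
      using Suc.prems by (simp add: Int_absorb1)
    with Suc.IH[OF Suc_leD[OF Suc.prems]]
    show "AE x in cube {1..d}. \<Phi> (Suc n) (restrict x {1..Suc n}) b = tt_partial G1 Gm r x (Suc n) b"
    proof eventually_elim
      case (elim x)
      have "tt_partial G1 Gm r x (Suc n) b = (\<Sum>a\<in>{1..r n}. tt_partial G1 Gm r x n a * Gm (Suc n) a (x (Suc n)) b)"
        by (rule tt_partial_Suc[OF Suc.hyps])
      also have "\<dots> = (\<Sum>a\<in>{1..r n}. \<Phi> n (restrict x {1..n}) a * Gm (Suc n) a (x (Suc n)) b)"
        by (rule sum.cong[OF refl]) (simp only: elim(1)[rule_format])
      finally show ?case
        using elim(2) by simp
    qed
  qed simp
qed

lemma core_eqs_tt_eval:
  assumes "2 \<le> d" and eqs: "core_eqs d r \<Phi> p G1 Gm Gd"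
  shows "AE x in cube {1..d}. p x = tt_eval d r G1 Gm Gd x"
proof -
  have "AE x in cube {1..d}. \<forall>b\<in>{1..r (d - 1)}.
      \<Phi> (d - 1) (restrict x {1..d - 1}) b = tt_partial G1 Gm r x (d - 1) b"
    using assms by (intro core_eqs_partial_contraction) auto
  with core_eqsD(3)[OF eqs] show ?thesis
    by eventually_elim (simp add: tt_eval_eq_sum_tt_partial[OF \<open>2 \<le> d\<close>])
qed

lemma core_eqs_unique:
  assumes "2 \<le> d" and on: "\<forall>k\<in>{1..d - 1}. orthonormal_L2 (cube {1..k}) (r k) (\<Phi> k)"
    and eqs: "core_eqs d r \<Phi> p G1 Gm Gd" and eqs': "core_eqs d r \<Phi> p G1' Gm' Gd'"
  shows "cores_agree d r G1 Gm Gd G1' Gm' Gd'"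
proof -
  have expansion_unique: "AE t in Imeas. F a t = F' a t"
    if "k \<in> {2..d}" "a \<in> {1..r (k - 1)}"
      and "AE x in cube {1..k}. (\<Sum>a\<in>{1..r (k - 1)}. \<Phi> (k - 1) (restrict x {1..k - 1}) a * F a (x k)) = g x"
      and "AE x in cube {1..k}. (\<Sum>a\<in>{1..r (k - 1)}. \<Phi> (k - 1) (restrict x {1..k - 1}) a * F' a (x k)) = g x"
    for k a F F' and g :: "(nat \<Rightarrow> real) \<Rightarrow> real"
  proof -
    have "{1..k} = insert k {1..k - 1}" "k \<notin> {1..k - 1}" "k - 1 \<in> {1..d - 1}"
      using that(1) by auto
    from orthonormal_L2_cube_expansion_unique[OF finite_atLeastAtMost this(2) bspec[OF on this(3)]
        that(3,4)[unfolded this(1)] that(2)]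
    show ?thesis .
  qed
  have "AE t in Imeas. G1' t a = G1 t a" if "a \<in> {1..r 1}" for a
  proof (rule AE_Imeas_of_AE_cube_singleton[where k=1])
    have "AE x in cube {1..1}. G1' (x 1) a = G1 (x 1) a"
      using core_eqsD(1)[OF eqs that] core_eqsD(1)[OF eqs' that] by eventually_elim simp
    then show "AE x in cube {1}. G1' (x 1) a = G1 (x 1) a"
      unfolding atLeastAtMost_singleton .
  qed
  moreover have "AE t in Imeas. Gm' k a t b = Gm k a t b"
    if "k \<in> {2..d - 1}" "a \<in> {1..r (k - 1)}" "b \<in> {1..r k}" for k a b
    using that expansion_unique[OF _ _ core_eqsD(2)[OF eqs' that(1,3)] core_eqsD(2)[OF eqs that(1,3)]]
    by auto
  moreover have "AE t in Imeas. Gd' a t = Gd a t" if "a \<in> {1..r (d - 1)}" for a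
    using that \<open>2 \<le> d\<close> expansion_unique[OF _ _ core_eqsD(3)[OF eqs'] core_eqsD(3)[OF eqs]]
    by simp
  ultimately show ?thesis
    unfolding cores_agree_def by blast
qed

lemma left_singular_vectors_choice:
  assumes "\<forall>k\<in>K. left_singular_vectors d p k (r k) (\<Phi> k)"
  obtains \<sigma> \<Psi> where "\<And>k a. k \<in> K \<Longrightarrow> a \<in> {1..r k} \<Longrightarrow> 0 < \<sigma> k a"
    and "\<And>k. k \<in> K \<Longrightarrow> orthonormal_L2 (cube {Suc k..d}) (r k) (\<Psi> k)"
    and "\<And>k. k \<in> K \<Longrightarrow> AE x in cube {1..d}. p x =
      (\<Sum>a\<in>{1..r k}. \<sigma> k a * \<Phi> k (restrict x {1..k}) a * \<Psi> k (restrict x {Suc k..d}) a)"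
proof -
  have "\<forall>k\<in>K. \<exists>\<sigma>\<Psi>. (\<forall>a\<in>{1..r k}. 0 < fst \<sigma>\<Psi> a) \<and>
      orthonormal_L2 (cube {Suc k..d}) (r k) (snd \<sigma>\<Psi>) \<and>
      (AE x in cube {1..d}. p x = (\<Sum>a\<in>{1..r k}.
        fst \<sigma>\<Psi> a * \<Phi> k (restrict x {1..k}) a * snd \<sigma>\<Psi> (restrict x {Suc k..d}) a))"
    using assms unfolding left_singular_vectors_def by force
  then obtain f where "\<forall>k\<in>K. (\<forall>a\<in>{1..r k}. 0 < fst (f k) a) \<and>
      orthonormal_L2 (cube {Suc k..d}) (r k) (snd (f k)) \<and>
      (AE x in cube {1..d}. p x = (\<Sum>a\<in>{1..r k}.
        fst (f k) a * \<Phi> k (restrict x {1..k}) a * snd (f k) (restrict x {Suc k..d}) a))"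
    by (rule bchoice[THEN exE])
  then show thesis
    by (intro that[of "\<lambda>k. fst (f k)" "\<lambda>k. snd (f k)"]) auto
qed

lemma schmidt_middle_core_eq:
  assumes k: "k \<in> {2..d - 1}" and b: "b \<in> {1..r k}" "0 < \<sigma> k b"
    and on: "\<And>j. j \<in> {1..d - 1} \<Longrightarrow> orthonormal_L2 (cube {Suc j..d}) (r j) (\<Psi> j)"
    and dec: "\<And>j. j \<in> {1..d - 1} \<Longrightarrow> AE x in cube {1..d}. p x =
      (\<Sum>a\<in>{1..r j}. \<sigma> j a * \<Phi> j (restrict x {1..j}) a * \<Psi> j (restrict x {Suc j..d}) a)"
  shows "AE x in cube {1..k}. (\<Sum>a\<in>{1..r (k - 1)}. \<Phi> (k - 1) (restrict x {1..k - 1}) a *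
      (\<sigma> (k - 1) a / \<sigma> k b * (\<integral>z. \<Psi> (k - 1) (z(k := x k)) a * \<Psi> k z b \<partial>cube {Suc k..d}))) = \<Phi> k x b"
proof -
  have sets: "{1..k} = insert k {1..k - 1}" "{Suc (k - 1)..d} = insert k {Suc k..d}"
    "{1..d} = insert k {1..k - 1} \<union> {Suc k..d}"
    using k by auto
  have "k - 1 \<in> {1..d - 1}" "k \<in> {1..d - 1}"
    and "k \<notin> {1..k - 1}" "k \<notin> {Suc k..d}" "{1..k - 1} \<inter> {Suc k..d} = {}" "\<sigma> k b \<noteq> 0"
    using k b by auto
  from schmidt_decompositions_core_eq[OF finite_atLeastAtMost finite_atLeastAtMost this(3-5)
      on[OF this(1), unfolded sets] dec[OF this(1), unfolded sets]
      on[OF this(2)] dec[OF this(2), unfolded sets] b(1) this(6)]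
  show ?thesis
    unfolding sets(1) .
qed

lemma core_eqs_exist:
  assumes "2 \<le> d" and svd: "\<forall>k\<in>{1..d - 1}. left_singular_vectors d p k (r k) (\<Phi> k)"
  shows "\<exists>G1 Gm Gd. core_eqs d r \<Phi> p G1 Gm Gd"
proof -
  obtain \<sigma> \<Psi> where pos: "\<And>k a. k \<in> {1..d - 1} \<Longrightarrow> a \<in> {1..r k} \<Longrightarrow> 0 < \<sigma> k a"
    and on: "\<And>k. k \<in> {1..d - 1} \<Longrightarrow> orthonormal_L2 (cube {Suc k..d}) (r k) (\<Psi> k)"
    and dec: "\<And>k. k \<in> {1..d - 1} \<Longrightarrow> AE x in cube {1..d}. p x =
        (\<Sum>a\<in>{1..r k}. \<sigma> k a * \<Phi> k (restrict x {1..k}) a * \<Psi> k (restrict x {Suc k..d}) a)"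
    using left_singular_vectors_choice[OF svd] by blast
  define G1 where "G1 t a = \<Phi> 1 ((\<lambda>_. undefined)(1 := t)) a" for t a
  define Gm where "Gm k a t b = \<sigma> (k - 1) a / \<sigma> k b *
    (\<integral>z. \<Psi> (k - 1) (z(k := t)) a * \<Psi> k z b \<partial>cube {Suc k..d})" for k a t b
  define Gd where "Gd a t = \<sigma> (d - 1) a * \<Psi> (d - 1) ((\<lambda>_. undefined)(d := t)) a" for a t
  have "AE x in cube {1..1}. G1 (x 1) a = \<Phi> 1 x a" for a
  proof (rule AE_I2)
    fix x assume "x \<in> space (cube {1..1})"
    then have "(\<lambda>_. undefined)(1 := x 1) = x"
      by (auto simp: space_cube PiE_iff extensional_def fun_eq_iff)
    then show "G1 (x 1) a = \<Phi> 1 x a"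
      by (simp add: G1_def)
  qed
  moreover have "AE x in cube {1..k}.
      (\<Sum>a\<in>{1..r (k - 1)}. \<Phi> (k - 1) (restrict x {1..k - 1}) a * Gm k a (x k) b) = \<Phi> k x b"
    if "k \<in> {2..d - 1}" "b \<in> {1..r k}" for k b
  proof -
    have "k \<in> {1..d - 1}"
      using that(1) by auto
    from schmidt_middle_core_eq[OF that pos[OF this that(2)] on dec] show ?thesis
      unfolding Gm_def .
  qed
  moreover have "AE x in cube {1..d}.
      (\<Sum>a\<in>{1..r (d - 1)}. \<Phi> (d - 1) (restrict x {1..d - 1}) a * Gd a (x d)) = p x"
  proof -
    have "d - 1 \<in> {1..d - 1}" "Suc (d - 1) = d"
      using \<open>2 \<le> d\<close> by auto
    have last: "restrict x {d} = (\<lambda>_. undefined)(d := x d)" for x :: "nat \<Rightarrow> real"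
      by (auto simp: restrict_def fun_eq_iff)
    from dec[OF \<open>d - 1 \<in> {1..d - 1}\<close>, unfolded \<open>Suc (d - 1) = d\<close>] show ?thesis
      by eventually_elim (simp add: Gd_def last ac_simps)
  qed
  ultimately show ?thesis
    unfolding core_eqs_def by blast
qed

theorem proposition1:
  fixes d :: nat and p :: "(nat \<Rightarrow> real) \<Rightarrow> real" and r :: "nat \<Rightarrow> nat"
    and \<Phi> :: "nat \<Rightarrow> (nat \<Rightarrow> real) \<Rightarrow> nat \<Rightarrow> real"
  assumes "2 \<le> d"
    and "probability_density d p"
    and "integrable (cube {1..d}) (\<lambda>x. (p x)^2)"
    and "\<forall>k\<in>{1..d-1}. left_singular_vectors d p k (r k) (\<Phi> k)"
  shows "\<exists>G1 Gm Gd.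
           core_eqs d r \<Phi> p G1 Gm Gd \<and>
           (\<forall>G1' Gm' Gd'. core_eqs d r \<Phi> p G1' Gm' Gd' \<longrightarrow> cores_agree d r G1 Gm Gd G1' Gm' Gd') \<and>
           (AE x in cube {1..d}. p x = tt_eval d r G1 Gm Gd x)"
proof -
  have on: "\<forall>k\<in>{1..d - 1}. orthonormal_L2 (cube {1..k}) (r k) (\<Phi> k)"
    using assms(4) by (auto simp: left_singular_vectors_def)
  obtain G1 Gm Gd where "core_eqs d r \<Phi> p G1 Gm Gd"
    using core_eqs_exist[OF assms(1,4)] by blast
  then show ?thesis
    using core_eqs_unique[OF assms(1) on] core_eqs_tt_eval[OF assms(1)] by blast
qed

end
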